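(* Let $X$ be a smooth projective curve of genus $g\ge 1$ over $\mathbb{F}_q$. Then, as $n\to\infty$, $$\widehat v_n = O\big(q^{(g-1)n(n+1)/2}\big),$$ where the implied constant depends only on $X/\mathbb{F}_q$.
   Context: The Artin zeta function of $X$ is $Z_X(t)=\sum_{D\ge 0} t^{\deg D}$, the sum being over effective divisors, with $t=q^{-s}$. It is a rational function $Z_X(t)=\frac{P_X(t)}{(1-t)(1-qt)}$, where $P_X$ is a polynomial of degree $2g$ with $P_X(0)=1$. Put $\zeta_X(s)=Z_X(q^{-s})$ and $\widehat\zeta_X(s):=q^{(g-1)s}\zeta_X(s)$. Define $\widehat\zeta_X^*(1):=\lim_{s\to 1}(1-q^{1-s})\widehat\zeta_X(s)=\frac{q^{g-1}P_X(q^{-1})}{1-q^{-1}}$ and, for $n\ge 1$, $\widehat v_n:=\widehat\zeta_X^*(1)\,\widehat\zeta_X(2)\widehat\zeta_X(3)\cdots\widehat\zeta_X(n)$. *)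

theory Defs
  imports "HOL-Computational_Algebra.Polynomial" "HOL-Library.Landau_Symbols" Complex_Main
begin

text \<open>A curve X/F_q of genus g is represented through its zeta data: the prime power q,
  the genus g and the numerator polynomial P_X (integer coefficients, degree 2g, P_X(0)=1).\<close>

definition prime_power :: "nat \<Rightarrow> bool" where
  "prime_power q \<longleftrightarrow> (\<exists>p k. prime p \<and> k \<ge> 1 \<and> q = p ^ k)"

definition Z_fun :: "nat \<Rightarrow> int poly \<Rightarrow> real \<Rightarrow> real" where
  "Z_fun q P t = poly (map_poly real_of_int P) t / ((1 - t) * (1 - real q * t))"

definition zeta_fun :: "nat \<Rightarrow> int poly \<Rightarrow> real \<Rightarrow> real" where
  "zeta_fun q P s = Z_fun q P (real q powr (- s))"

definition zeta_hat :: "nat \<Rightarrow> nat \<Rightarrow> int poly \<Rightarrow> real \<Rightarrow> real" where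
  "zeta_hat q g P s = real q powr ((real g - 1) * s) * zeta_fun q P s"

text \<open>residue value: q^{g-1} P_X(1/q) / (1 - 1/q)\<close>
definition zeta_hat_star_1 :: "nat \<Rightarrow> nat \<Rightarrow> int poly \<Rightarrow> real" where
  "zeta_hat_star_1 q g P =
     real q powr (real g - 1) * poly (map_poly real_of_int P) (1 / real q) / (1 - 1 / real q)"

definition v_hat :: "nat \<Rightarrow> nat \<Rightarrow> int poly \<Rightarrow> nat \<Rightarrow> real" where
  "v_hat q g P n = zeta_hat_star_1 q g P * (\<Prod>k=2..n. zeta_hat q g P (real k))"

end

theory Submission
  imports Defs
begin

text \<open>Since \<open>zeta_hat q g P k = q\<^bsup>(g-1)k\<^esup> Z(q\<^bsup>-k\<^esup>)\<close>, the product \<open>v_hat q g P n\<close> is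
  \<open>zeta_hat_star_1 q g P\<close> times \<open>q\<^bsup>(g-1)(2+\<dots>+n)\<^esup> \<le> q\<^bsup>(g-1)n(n+1)/2\<^esup>\<close> (this is where
  \<open>g \<ge> 1\<close> enters) times \<open>\<Prod>\<^sub>k Z(q\<^bsup>-k\<^esup>)\<close>. As \<open>P(0) = 1\<close>, each factor \<open>Z(q\<^bsup>-k\<^esup>)\<close> is
  \<open>1 + O(q\<^bsup>1-k\<^esup>)\<close>, hence at most \<open>exp(c q\<^bsup>1-k\<^esup>)\<close>, and the geometric series bounds the
  product uniformly in \<open>n\<close>.\<close>

lemma prime_power_ge_2:
  assumes "prime_power q"
  shows "q \<ge> 2"
proof -
  obtain p k where p: "prime p" and "k \<ge> 1" and "q = p ^ k"
    using assms unfolding prime_power_def by blast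
  then have "p \<le> q"
    using prime_ge_1_nat[OF p] by (simp add: self_le_power)
  then show ?thesis
    using prime_ge_2_nat[OF p] by simp
qed

lemma abs_poly_le_sum_abs_coeff:
  fixes p :: "real poly"
  assumes "\<bar>x\<bar> \<le> 1"
  shows "\<bar>poly p x\<bar> \<le> (\<Sum>i\<le>degree p. \<bar>coeff p i\<bar>)"
proof -
  have "\<bar>poly p x\<bar> \<le> (\<Sum>i\<le>degree p. \<bar>coeff p i * x ^ i\<bar>)"
    unfolding poly_altdef by (rule sum_abs)
  also have "\<dots> \<le> (\<Sum>i\<le>degree p. \<bar>coeff p i\<bar>)"
    using assms by (intro sum_mono) (simp add: abs_mult power_abs mult_left_le power_le_one)
  finally show ?thesis .
qed

lemma abs_poly_le_exp_linear:
  fixes p :: "real poly"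
  assumes "coeff p 0 = 1"
  obtains C where "C \<ge> 0" and "\<And>x. 0 \<le> x \<Longrightarrow> x \<le> 1 \<Longrightarrow> \<bar>poly p x\<bar> \<le> exp (C * x)"
proof -
  obtain p' where p: "p = pCons 1 p'"
    using assms by (cases p) auto
  define C where "C = (\<Sum>i\<le>degree p'. \<bar>coeff p' i\<bar>)"
  have "\<bar>poly p x\<bar> \<le> exp (C * x)" if "0 \<le> x" "x \<le> 1" for x
  proof -
    have "\<bar>poly p x\<bar> \<le> 1 + x * \<bar>poly p' x\<bar>"
      using that abs_triangle_ineq[of 1 "x * poly p' x"] by (simp add: p abs_mult)
    also have "\<dots> \<le> 1 + C * x"
      using that abs_poly_le_sum_abs_coeff[of x p']
      unfolding C_def by (simp add: mult.commute mult_left_mono)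
    also have "\<dots> \<le> exp (C * x)"
      by (rule exp_ge_add_one_self)
    finally show ?thesis .
  qed
  moreover have "C \<ge> 0"
    unfolding C_def by (simp add: sum_nonneg)
  ultimately show ?thesis
    using that by blast
qed

lemma inverse_one_minus_le_exp:
  fixes y :: real
  assumes "0 \<le> y" "y \<le> 1/2"
  shows "1 / (1 - y) \<le> exp (2 * y)"
proof -
  have "(1 + 2 * y) * (1 - y) = 1 + y * (1 - 2 * y)"
    by (simp add: algebra_simps)
  moreover have "y * (1 - 2 * y) \<ge> 0"
    using assms by simp
  ultimately have "1 \<le> (1 + 2 * y) * (1 - y)"
    by simp
  then have "1 / (1 - y) \<le> 1 + 2 * y"
    using assms by (simp add: divide_simps)
  also have "\<dots> \<le> exp (2 * y)"
    by (rule exp_ge_add_one_self)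
  finally show ?thesis .
qed

lemma abs_Z_fun_le_exp:
  assumes "q \<ge> 1" and "C \<ge> 0"
    and P: "\<And>x. 0 \<le> x \<Longrightarrow> x \<le> 1 \<Longrightarrow> \<bar>poly (map_poly real_of_int P) x\<bar> \<le> exp (C * x)"
    and "0 \<le> t" "real q * t \<le> 1/2"
  shows "\<bar>Z_fun q P t\<bar> \<le> exp ((C + 4) * (real q * t))"
proof -
  define y where "y = real q * t"
  have "t \<le> y"
    using assms(1,4) unfolding y_def by (simp add: mult_le_cancel_right1)
  have y: "0 \<le> y" "y \<le> 1/2"
    using assms unfolding y_def by auto
  have "\<bar>Z_fun q P t\<bar> = \<bar>poly (map_poly real_of_int P) t\<bar> * (1 / (1 - t)) * (1 / (1 - y))"
    using \<open>t \<le> y\<close> y unfolding Z_fun_def y_def by (simp add: abs_mult abs_divide)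
  also have "\<dots> \<le> exp (C * y) * exp (2 * y) * exp (2 * y)"
  proof (intro mult_mono)
    show "\<bar>poly (map_poly real_of_int P) t\<bar> \<le> exp (C * y)"
    proof -
      have "\<bar>poly (map_poly real_of_int P) t\<bar> \<le> exp (C * t)"
        using P \<open>0 \<le> t\<close> \<open>t \<le> y\<close> y by simp
      also have "\<dots> \<le> exp (C * y)"
        using \<open>C \<ge> 0\<close> \<open>t \<le> y\<close> by (simp add: mult_left_mono)
      finally show ?thesis .
    qed
    show "1 / (1 - t) \<le> exp (2 * y)"
      using inverse_one_minus_le_exp[of t] \<open>0 \<le> t\<close> \<open>t \<le> y\<close> y by (simp add: order_trans)
    show "1 / (1 - y) \<le> exp (2 * y)"
      using inverse_one_minus_le_exp y by blast
  qed (use y \<open>t \<le> y\<close> in auto)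
  also have "\<dots> = exp ((C + 4) * y)"
    by (simp add: mult_exp_exp algebra_simps)
  finally show ?thesis
    unfolding y_def .
qed

lemma abs_prod_le_exp_suminf:
  fixes a b :: "nat \<Rightarrow> real"
  assumes "finite A" and "\<And>k. k \<in> A \<Longrightarrow> \<bar>a k\<bar> \<le> exp (b k)"
    and "\<And>k. b k \<ge> 0" and "summable b"
  shows "\<bar>\<Prod>k\<in>A. a k\<bar> \<le> exp (\<Sum>k. b k)"
proof -
  have "\<bar>\<Prod>k\<in>A. a k\<bar> = (\<Prod>k\<in>A. \<bar>a k\<bar>)"
    by (rule abs_prod)
  also have "\<dots> \<le> (\<Prod>k\<in>A. exp (b k))"
    using assms(2) by (intro prod_mono) auto
  also have "\<dots> = exp (\<Sum>k\<in>A. b k)"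
    using assms(1) by (simp add: exp_sum)
  also have "\<dots> \<le> exp (\<Sum>k. b k)"
    using assms(1,3,4) by (simp add: sum_le_suminf)
  finally show ?thesis .
qed

lemma sum_atLeastAtMost_2_le: "(\<Sum>k=2..n. real k) \<le> real n * (real n + 1) / 2"
proof -
  have "(\<Sum>k=2..n. real k) \<le> (\<Sum>k=0..n. real k)"
    by (intro sum_mono2) auto
  also have "\<dots> = real n * (real n + 1) / 2"
    using double_gauss_sum[where 'a = real, of n] by simp
  finally show ?thesis .
qed

lemma zeta_hat_of_nat:
  assumes "q > 0"
  shows "zeta_hat q g P (real k) = real q powr ((real g - 1) * real k) * Z_fun q P ((1 / real q) ^ k)"
  using assms by (simp add: zeta_hat_def zeta_fun_def powr_minus powr_realpow power_one_over inverse_eq_divide)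

lemma v_hat_eq:
  assumes "q > 0"
  shows "v_hat q g P n = zeta_hat_star_1 q g P * real q powr ((real g - 1) * (\<Sum>k=2..n. real k))
           * (\<Prod>k=2..n. Z_fun q P ((1 / real q) ^ k))"
  using assms
  by (simp add: v_hat_def zeta_hat_of_nat prod.distrib powr_sum sum_distrib_left)

lemma abs_v_hat_le:
  assumes q: "q \<ge> 2" and "g \<ge> 1" and C: "C \<ge> 0"
    and P: "\<And>x. 0 \<le> x \<Longrightarrow> x \<le> 1 \<Longrightarrow> \<bar>poly (map_poly real_of_int P) x\<bar> \<le> exp (C * x)"
  shows "\<bar>v_hat q g P n\<bar> \<le> \<bar>zeta_hat_star_1 q g P\<bar> * exp (\<Sum>k. (C + 4) * real q * (1 / real q) ^ k)
           * real q powr ((real g - 1) * real n * (real n + 1) / 2)"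
proof -
  define b where "b k = (C + 4) * real q * (1 / real q) ^ k" for k
  have "summable b"
    unfolding b_def using q by (intro summable_mult summable_geometric) simp
  have Z_le: "\<bar>Z_fun q P ((1 / real q) ^ k)\<bar> \<le> exp (b k)" if "k \<ge> 2" for k
  proof -
    have "real q * (1 / real q) ^ k \<le> real q * (1 / real q) ^ 2"
      using that q by (intro mult_left_mono power_decreasing) auto
    also have "\<dots> \<le> 1/2"
      using q by (simp add: power2_eq_square divide_simps)
    finally have "real q * (1 / real q) ^ k \<le> 1/2" .
    then show ?thesis
      using abs_Z_fun_le_exp[OF _ C P] q unfolding b_def by (simp add: mult.assoc)
  qed
  have Z_prod_le: "\<bar>\<Prod>k=2..n. Z_fun q P ((1 / real q) ^ k)\<bar> \<le> exp (\<Sum>k. b k)"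
  proof (rule abs_prod_le_exp_suminf)
    show "b k \<ge> 0" for k
      unfolding b_def using C by simp
  qed (use Z_le \<open>summable b\<close> in auto)
  have powr_le: "real q powr ((real g - 1) * (\<Sum>k=2..n. real k))
                   \<le> real q powr ((real g - 1) * real n * (real n + 1) / 2)"
  proof -
    have "(real g - 1) * (\<Sum>k=2..n. real k) \<le> (real g - 1) * (real n * (real n + 1) / 2)"
      using \<open>g \<ge> 1\<close> sum_atLeastAtMost_2_le[of n] by (intro mult_left_mono) simp_all
    then show ?thesis
      using q by (intro powr_mono) auto
  qed
  have "\<bar>v_hat q g P n\<bar> = \<bar>zeta_hat_star_1 q g P\<bar> * real q powr ((real g - 1) * (\<Sum>k=2..n. real k))
                              * \<bar>\<Prod>k=2..n. Z_fun q P ((1 / real q) ^ k)\<bar>"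
    using q by (simp add: v_hat_eq abs_mult)
  also have "\<dots> \<le> \<bar>zeta_hat_star_1 q g P\<bar> * real q powr ((real g - 1) * real n * (real n + 1) / 2)
                  * exp (\<Sum>k. b k)"
    using powr_le Z_prod_le by (intro mult_mono mult_left_mono) auto
  finally show ?thesis
    unfolding b_def by (simp only: mult_ac)
qed

theorem mainTheorem1:
  fixes q g :: nat and P :: "int poly"
  assumes "prime_power q" and "g \<ge> 1"
    and "degree P = 2 * g" and "poly P 0 = 1"
  shows "(\<lambda>n. v_hat q g P n) \<in> O(\<lambda>n. real q powr ((real g - 1) * real n * (real n + 1) / 2))"
proof -
  have "coeff (map_poly real_of_int P) 0 = 1"
    using assms(4) by (simp add: coeff_map_poly poly_0_coeff_0)
  then obtain C where C: "C \<ge> 0"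
    and P: "\<And>x. 0 \<le> x \<Longrightarrow> x \<le> 1 \<Longrightarrow> \<bar>poly (map_poly real_of_int P) x\<bar> \<le> exp (C * x)"
    using abs_poly_le_exp_linear by blast
  define K where "K = \<bar>zeta_hat_star_1 q g P\<bar> * exp (\<Sum>k. (C + 4) * real q * (1 / real q) ^ k)"
  have "\<bar>v_hat q g P n\<bar> \<le> K * real q powr ((real g - 1) * real n * (real n + 1) / 2)" for n
    unfolding K_def using abs_v_hat_le[OF prime_power_ge_2[OF assms(1)] assms(2) C P] .
  then show ?thesis
    by (intro bigoI[of _ K] always_eventually allI) simp
qed

end
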